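(* Let $n\ge 1$ and $0\leq k\leq \lfloor (n-1)/2\rfloor$. Let $H_k$ be the graph with vertex set $\{u_1,\dots,u_n,v_1,\dots,v_n\}$ whose edges are: $u_iv_i$ for all $1\le i\le n$; for each $1\le t\le k$, the edges $u_{2t-1}u_{2t}$ and $v_{2t-1}v_{2t}$; and for every other pair $i<j$ (i.e. $\{i,j\}\neq\{2t-1,2t\}$ for all $t\le k$), the edges $u_iv_j$ and $v_iu_j$. Then $f(H_k)=n-k-1$. In particular, for $k=\lfloor (n-1)/2\rfloor$, $f(H_k)=\lfloor n/2\rfloor$, while $F(H_k)=n-1$.
   Context: All graphs are finite and simple. For a perfect matching $M$ of $G$, a forcing set of $M$ is a subset $S\subseteq M$ contained in no other perfect matching of $G$; $f(G,M)$ is the minimum size of a forcing set of $M$. $f(G)$ and $F(G)$ are the minimum and maximum of $f(G,M)$ over all perfect matchings $M$ of $G$. *)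

theory Defs
  imports Main
begin

text \<open>A finite simple graph is given by a vertex set V and an edge set E of
two-element subsets of V.\<close>

definition perfect_matching :: "'a set \<Rightarrow> 'a set set \<Rightarrow> 'a set set \<Rightarrow> bool" where
  "perfect_matching V E M \<longleftrightarrow> M \<subseteq> E \<and> (\<forall>x\<in>V. \<exists>!e. e \<in> M \<and> x \<in> e)"

definition forcing_set :: "'a set \<Rightarrow> 'a set set \<Rightarrow> 'a set set \<Rightarrow> 'a set set \<Rightarrow> bool" where
  "forcing_set V E M S \<longleftrightarrow> S \<subseteq> M \<and>
     (\<forall>M'. perfect_matching V E M' \<and> S \<subseteq> M' \<longrightarrow> M' = M)"

definition forcing_number :: "'a set \<Rightarrow> 'a set set \<Rightarrow> 'a set set \<Rightarrow> nat" where
  "forcing_number V E M = (LEAST c. \<exists>S. forcing_set V E M S \<and> card S = c)"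

text \<open>f(G) and F(G): minimum and maximum forcing numbers over all perfect matchings.\<close>
definition min_forcing_number :: "'a set \<Rightarrow> 'a set set \<Rightarrow> nat" where
  "min_forcing_number V E = Min {forcing_number V E M | M. perfect_matching V E M}"

definition max_forcing_number :: "'a set \<Rightarrow> 'a set set \<Rightarrow> nat" where
  "max_forcing_number V E = Max {forcing_number V E M | M. perfect_matching V E M}"

text \<open>The graph H_k on vertices u_1..u_n, v_1..v_n; u_i is (False, i), v_i is (True, i).\<close>
definition H_verts :: "nat \<Rightarrow> (bool \<times> nat) set" where
  "H_verts n = UNIV \<times> {1..n}"

definition H_paired :: "nat \<Rightarrow> nat \<Rightarrow> nat \<Rightarrow> bool" where
  "H_paired k i j \<longleftrightarrow> (\<exists>t. 1 \<le> t \<and> t \<le> k \<and> i = 2*t - 1 \<and> j = 2*t)"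

definition H_edges :: "nat \<Rightarrow> nat \<Rightarrow> (bool \<times> nat) set set" where
  "H_edges n k =
     {{(False, i), (True, i)} | i. 1 \<le> i \<and> i \<le> n}
   \<union> {{(False, 2*t - 1), (False, 2*t)} | t. 1 \<le> t \<and> t \<le> k}
   \<union> {{(True, 2*t - 1), (True, 2*t)} | t. 1 \<le> t \<and> t \<le> k}
   \<union> {{(False, i), (True, j)} | i j. 1 \<le> i \<and> i < j \<and> j \<le> n \<and> \<not> H_paired k i j}
   \<union> {{(True, i), (False, j)} | i j. 1 \<le> i \<and> i < j \<and> j \<le> n \<and> \<not> H_paired k i j}"

end

theory Submission
  imports Defs
begin

(* Two edges e, f of a perfect matching M that lie on an M-alternating 4-cycle can be exchanged
   for the other two edges of the cycle, so every forcing set of M meets {e, f}.  Hence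
   f(H_k, M) >= n - k - 1 for every M as soon as every set T of pairwise non-switchable edges of
   M has at most k + 1 elements.  Two edges lying inside opposite sides are always switchable, so
   T has no edge inside one of the sides.  The edges of T inside the other side fill distinct
   blocks {2t-1, 2t}.  For two cross edges of T one of the two crossing edges between them must
   be missing, which only happens between the two indices of a block; counting these missing
   edges shows that there is at most one cross edge more than there are blocks touched by the
   missing edges, and those blocks contain no side edge of T.
   The bound is attained by the matching that joins the two vertices of every block on both
   sides and u_i to v_i otherwise: it is forced by its k block edges on the u-side and its edges
   u_i v_i with i > 2k + 1.  In the matching {u_i v_i | i} any two edges are switchable, so its
   forcing number is n - 1, the largest possible value. *)

section \<open>Perfect matchings and forcing sets\<close>

definition simple_graph :: "'a set \<Rightarrow> 'a set set \<Rightarrow> bool" where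
  "simple_graph V E \<longleftrightarrow> (\<forall>e\<in>E. \<exists>x y. e = {x,y} \<and> x \<noteq> y \<and> x \<in> V \<and> y \<in> V)"

text \<open>The edges e and f lie on the alternating 4-cycle e, {x,y}, f, {x',y'}.\<close>
definition switchable :: "'a set set \<Rightarrow> 'a set \<Rightarrow> 'a set \<Rightarrow> bool" where
  "switchable E e f \<longleftrightarrow> (\<exists>x x' y y'. e = {x,x'} \<and> f = {y,y'} \<and> {x,y} \<in> E \<and> {x',y'} \<in> E)"

lemma switchableI: "e = {x,x'} \<Longrightarrow> f = {y,y'} \<Longrightarrow> {x,y} \<in> E \<Longrightarrow> {x',y'} \<in> E \<Longrightarrow> switchable E e f"
  unfolding switchable_def by blast

lemma perfect_matching_unique:
  assumes "perfect_matching V E M" "z \<in> V" "e \<in> M" "f \<in> M" "z \<in> e" "z \<in> f"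
  shows "e = f"
proof -
  have "\<exists>!g. g \<in> M \<and> z \<in> g" using assms(1,2) unfolding perfect_matching_def by simp
  then show ?thesis using assms(3-6) by metis
qed

lemma perfect_matching_cover:
  assumes "perfect_matching V E M" "z \<in> V"
  obtains e where "e \<in> M" "z \<in> e"
  using assms unfolding perfect_matching_def by metis

lemma perfect_matching_edge:
  assumes "perfect_matching V E M" "simple_graph V E" "e \<in> M"
  obtains x y where "e = {x,y}" "x \<noteq> y" "x \<in> V" "y \<in> V"
proof -
  have "e \<in> E" using assms(1,3) unfolding perfect_matching_def by blast
  then show ?thesis using assms(2) that unfolding simple_graph_def by metis
qed

lemma simple_graph_doubleton:
  assumes "simple_graph V E" "{x,y} \<in> E"
  shows "x \<noteq> y \<and> x \<in> V \<and> y \<in> V"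
proof -
  obtain a b where "{x,y} = {a,b}" "a \<noteq> b" "a \<in> V" "b \<in> V"
    using assms unfolding simple_graph_def by blast
  then show ?thesis by (auto simp: doubleton_eq_iff)
qed

lemma perfect_matching_subset_eq:
  assumes pm: "perfect_matching V E M" and pm': "perfect_matching V E M'"
    and E: "simple_graph V E" and sub: "M \<subseteq> M'"
  shows "M' = M"
proof
  show "M' \<subseteq> M"
  proof
    fix e assume e: "e \<in> M'"
    obtain x y where "e = {x,y}" "x \<in> V" using perfect_matching_edge[OF pm' E e] .
    then have x: "x \<in> e" "x \<in> V" by auto
    obtain f where f: "f \<in> M" "x \<in> f" using perfect_matching_cover[OF pm x(2)] .
    have "e = f" using perfect_matching_unique[OF pm' x(2) e _ x(1) f(2)] f(1) sub by blast
    with f(1) show "e \<in> M" by simp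
  qed
qed (fact sub)

lemma forcing_setI:
  assumes "perfect_matching V E M" "simple_graph V E" "S \<subseteq> M"
    and "\<And>M'. perfect_matching V E M' \<Longrightarrow> S \<subseteq> M' \<Longrightarrow> M \<subseteq> M'"
  shows "forcing_set V E M S"
  unfolding forcing_set_def
proof (intro conjI allI impI)
  fix M' assume "perfect_matching V E M' \<and> S \<subseteq> M'"
  then show "M' = M" using assms(4) perfect_matching_subset_eq[OF assms(1) _ assms(2)] by blast
qed (fact assms(3))

lemma forcing_set_self:
  "perfect_matching V E M \<Longrightarrow> simple_graph V E \<Longrightarrow> forcing_set V E M M"
  by (rule forcing_setI) auto

lemma perfect_matching_switch:
  assumes pm: "perfect_matching V E M" and E: "simple_graph V E"
    and e: "{x,x'} \<in> M" and f: "{y,y'} \<in> M" and ef: "{x,x'} \<noteq> {y,y'}"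
    and xy: "{x,y} \<in> E" and xy': "{x',y'} \<in> E"
  shows "perfect_matching V E (M - {{x,x'},{y,y'}} \<union> {{x,y},{x',y'}})"
proof -
  have V: "x \<in> V" "x' \<in> V" "y \<in> V" "y' \<in> V" "x \<noteq> x'" "y \<noteq> y'"
    using simple_graph_doubleton[OF E] e f pm unfolding perfect_matching_def by blast+
  have disj: "x \<noteq> y" "x \<noteq> y'" "x' \<noteq> y" "x' \<noteq> y'"
    using perfect_matching_unique[OF pm _ e f] V ef by auto
  have old: "z \<notin> g" if "g \<in> M" "g \<noteq> {x,x'}" "g \<noteq> {y,y'}" "z \<in> {x,x',y,y'}" for g z
    using that perfect_matching_unique[OF pm _ e] perfect_matching_unique[OF pm _ f] V by blast
  show ?thesis
    unfolding perfect_matching_def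
  proof (intro conjI ballI)
    show "M - {{x,x'},{y,y'}} \<union> {{x,y},{x',y'}} \<subseteq> E"
      using pm xy xy' unfolding perfect_matching_def by blast
    fix z assume z: "z \<in> V"
    show "\<exists>!g. g \<in> M - {{x,x'},{y,y'}} \<union> {{x,y},{x',y'}} \<and> z \<in> g"
    proof (cases "z \<in> {x,x',y,y'}")
      case True
      define g where "g = (if z \<in> {x,y} then {x,y} else {x',y'})"
      have g: "g \<in> {{x,y},{x',y'}}" "z \<in> g" using True unfolding g_def by auto
      have uniq: "h = g" if h: "h \<in> M - {{x,x'},{y,y'}} \<union> {{x,y},{x',y'}}" "z \<in> h" for h
      proof -
        have "h \<in> {{x,y},{x',y'}}" using h old[OF _ _ _ True] by blast
        moreover have "{x,y} \<inter> {x',y'} = {}" using disj V by auto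
        ultimately show ?thesis using h(2) g by blast
      qed
      show ?thesis
        by (rule ex1I[of _ g]) (use g uniq in auto)
    next
      case False
      obtain g where g: "g \<in> M" "z \<in> g" using perfect_matching_cover[OF pm z] .
      have uniq: "h = g" if "h \<in> M - {{x,x'},{y,y'}} \<union> {{x,y},{x',y'}}" "z \<in> h" for h
        using that False perfect_matching_unique[OF pm z _ g(1) _ g(2)] by blast
      have "g \<noteq> {x,x'}" "g \<noteq> {y,y'}" using g False by auto
      with g show ?thesis
        by (intro ex1I[of _ g]) (use uniq in auto)
    qed
  qed
qed

lemma forcing_set_not_switchable:
  assumes pm: "perfect_matching V E M" and E: "simple_graph V E"
    and S: "forcing_set V E M S" and e: "e \<in> M - S" and f: "f \<in> M - S" and ef: "e \<noteq> f"
  shows "\<not> switchable E e f"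
proof
  assume "switchable E e f"
  then obtain x x' y y' where xy: "e = {x,x'}" "f = {y,y'}" "{x,y} \<in> E" "{x',y'} \<in> E"
    unfolding switchable_def by blast
  define M' where "M' = M - {{x,x'},{y,y'}} \<union> {{x,y},{x',y'}}"
  have pm': "perfect_matching V E M'"
    unfolding M'_def using perfect_matching_switch[OF pm E] xy e f ef by blast
  have "S \<subseteq> M'" using S e f xy unfolding M'_def forcing_set_def by blast
  then have "M' = M" using S pm' unfolding forcing_set_def by blast
  have "{y,y'} \<subseteq> V" using simple_graph_doubleton[OF E] f xy(2) pm unfolding perfect_matching_def by blast
  then have "y \<notin> e" "y' \<notin> e" using perfect_matching_unique[OF pm _ _ _ _ _] e f ef xy(2) by blast+
  then have "e \<notin> M'" unfolding M'_def using xy(1) by auto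
  with \<open>M' = M\<close> e show False by blast
qed

lemma card_perfect_matching:
  assumes pm: "perfect_matching V E M" and E: "simple_graph V E" and V: "finite V"
  shows "finite M" and "card V = 2 * card M"
proof -
  have MV: "M \<subseteq> Pow V"
    using perfect_matching_edge[OF pm E] by (metis PowI empty_subsetI insert_subset subsetI)
  then show "finite M" using V by (meson finite_Pow_iff finite_subset)
  have "\<Union>M = V" using MV pm unfolding perfect_matching_def by blast
  moreover have "pairwise disjnt M"
    unfolding pairwise_def disjnt_def
  proof (intro ballI impI)
    fix e f assume "e \<in> M" "f \<in> M" "e \<noteq> f"
    then show "e \<inter> f = {}" using perfect_matching_unique[OF pm _ \<open>e \<in> M\<close> \<open>f \<in> M\<close>] MV by blast
  qed
  moreover have "card e = 2" if "e \<in> M" for e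
    using perfect_matching_edge[OF pm E that] by (metis card_2_iff)
  moreover have "finite e" if "e \<in> M" for e using that MV V by (meson PowD finite_subset subsetD)
  ultimately have "card V = (\<Sum>e\<in>M. 2)"
    using card_Union_disjoint[of M] by (metis sum.cong)
  then show "card V = 2 * card M" by simp
qed

lemma perfect_matching_involution:
  assumes "\<And>x. x \<in> V \<Longrightarrow> \<sigma> x \<in> V \<and> \<sigma> x \<noteq> x \<and> \<sigma> (\<sigma> x) = x \<and> {x, \<sigma> x} \<in> E"
  shows "perfect_matching V E ((\<lambda>x. {x, \<sigma> x}) ` V)"
  unfolding perfect_matching_def
proof (intro conjI ballI)
  show "(\<lambda>x. {x, \<sigma> x}) ` V \<subseteq> E" using assms by auto
  fix x assume x: "x \<in> V"
  have "e = {x, \<sigma> x}" if "e \<in> (\<lambda>x. {x, \<sigma> x}) ` V" "x \<in> e" for e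
    using that assms by (auto simp: insert_commute)
  then show "\<exists>!e. e \<in> (\<lambda>x. {x, \<sigma> x}) ` V \<and> x \<in> e"
    using x by (intro ex1I[of _ "{x, \<sigma> x}"]) auto
qed

lemma perfect_matching_forced_edge:
  assumes pm: "perfect_matching V E M" and E: "simple_graph V E" and x: "x \<in> V"
    and others: "\<And>z. {x,z} \<in> E \<Longrightarrow> z \<noteq> y \<Longrightarrow> \<exists>e\<in>M. z \<in> e \<and> x \<notin> e"
  shows "{x,y} \<in> M"
proof -
  obtain e where e: "e \<in> M" "x \<in> e" using perfect_matching_cover[OF pm x] .
  then obtain z where z: "e = {x,z}"
    using perfect_matching_edge[OF pm E e(1)] by (metis doubleton_eq_iff insertE singletonD)
  have "z = y"
  proof (rule ccontr)
    assume "z \<noteq> y"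
    moreover have "{x,z} \<in> E" using e z pm unfolding perfect_matching_def by blast
    ultimately obtain f where f: "f \<in> M" "z \<in> f" "x \<notin> f" using others by blast
    have "z \<in> V" using simple_graph_doubleton[OF E \<open>{x,z} \<in> E\<close>] by blast
    then have "f = e" using perfect_matching_unique[OF pm _ f(1) e(1) f(2)] z by blast
    then show False using f(3) e(2) by blast
  qed
  then show ?thesis using e z by blast
qed

lemma forcing_set_Diff_singleton:
  assumes pm: "perfect_matching V E M" and E: "simple_graph V E" and e: "e \<in> M"
  shows "forcing_set V E M (M - {e})"
proof (rule forcing_setI[OF pm E])
  fix M' assume pm': "perfect_matching V E M'" and sub: "M - {e} \<subseteq> M'"
  obtain x y where xy: "e = {x,y}" "x \<in> V" using perfect_matching_edge[OF pm E e] by metis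
  have "{x,y} \<in> M'"
  proof (rule perfect_matching_forced_edge[OF pm' E xy(2)])
    fix z assume "{x,z} \<in> E" "z \<noteq> y"
    then have "z \<in> V" using simple_graph_doubleton[OF E] by blast
    then obtain f where f: "f \<in> M" "z \<in> f" using perfect_matching_cover[OF pm] by blast
    have "z \<noteq> x" using simple_graph_doubleton[OF E \<open>{x,z} \<in> E\<close>] by blast
    then have "f \<noteq> e" using f(2) \<open>z \<noteq> y\<close> xy(1) by blast
    moreover have "x \<notin> f"
      using perfect_matching_unique[OF pm xy(2) f(1) e] \<open>f \<noteq> e\<close> xy(1) by blast
    ultimately show "\<exists>f\<in>M'. z \<in> f \<and> x \<notin> f" using f sub by blast
  qed
  then show "M \<subseteq> M'" using sub xy(1) by blast
qed auto

lemma forcing_number_le: "forcing_set V E M S \<Longrightarrow> forcing_number V E M \<le> card S"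
  unfolding forcing_number_def by (rule Least_le) blast

lemma forcing_number_attained:
  assumes "forcing_set V E M S"
  obtains S' where "forcing_set V E M S'" "card S' = forcing_number V E M"
proof -
  have "\<exists>S'. forcing_set V E M S' \<and> card S' = forcing_number V E M"
    unfolding forcing_number_def by (rule LeastI_ex) (use assms in blast)
  then show ?thesis using that by blast
qed

lemma card_minus_le_forcing_number:
  assumes pm: "perfect_matching V E M" and E: "simple_graph V E" and V: "finite V"
    and bound: "\<And>T. T \<subseteq> M \<Longrightarrow> (\<And>e f. e \<in> T \<Longrightarrow> f \<in> T \<Longrightarrow> e \<noteq> f \<Longrightarrow> \<not> switchable E e f)
                  \<Longrightarrow> card T \<le> c"
  shows "card M - c \<le> forcing_number V E M"
proof -
  obtain S where S: "forcing_set V E M S" "card S = forcing_number V E M"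
    using forcing_number_attained[OF forcing_set_self[OF pm E]] .
  have SM: "S \<subseteq> M" using S(1) unfolding forcing_set_def by blast
  have "card (M - S) \<le> c"
    by (rule bound) (use forcing_set_not_switchable[OF pm E S(1)] in auto)
  moreover have "card (M - S) = card M - card S"
    using card_Diff_subset[OF finite_subset[OF SM card_perfect_matching(1)[OF pm E V]] SM] .
  ultimately show ?thesis using S(2) by linarith
qed

lemma forcing_number_le_card_minus_one:
  assumes pm: "perfect_matching V E M" and E: "simple_graph V E" and V: "finite V" and "M \<noteq> {}"
  shows "forcing_number V E M \<le> card M - 1"
proof -
  obtain e where "e \<in> M" using \<open>M \<noteq> {}\<close> by blast
  then have "forcing_number V E M \<le> card (M - {e})"
    by (intro forcing_number_le forcing_set_Diff_singleton[OF pm E])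
  then show ?thesis using \<open>e \<in> M\<close> card_perfect_matching(1)[OF pm E V] by simp
qed

lemma finite_perfect_matchings:
  assumes V: "finite V" and E: "simple_graph V E"
  shows "finite {M. perfect_matching V E M}"
proof (rule finite_subset)
  have "E \<subseteq> Pow V"
  proof
    fix e assume "e \<in> E"
    then obtain x y where "e = {x,y}" "x \<in> V" "y \<in> V" using E unfolding simple_graph_def by blast
    then show "e \<in> Pow V" by simp
  qed
  then show "{M. perfect_matching V E M} \<subseteq> Pow (Pow V)" unfolding perfect_matching_def by blast
qed (use V in simp)

lemma min_forcing_number_eqI:
  assumes "finite {M. perfect_matching V E M}" "perfect_matching V E M\<^sub>0" "forcing_number V E M\<^sub>0 = c"
    and "\<And>M. perfect_matching V E M \<Longrightarrow> c \<le> forcing_number V E M"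
  shows "min_forcing_number V E = c"
  unfolding min_forcing_number_def
proof (rule Min_eqI)
  show "finite {forcing_number V E M | M. perfect_matching V E M}"
    using assms(1) by (simp add: setcompr_eq_image)
  show "c \<in> {forcing_number V E M | M. perfect_matching V E M}" using assms(2,3) by blast
  fix y assume "y \<in> {forcing_number V E M | M. perfect_matching V E M}"
  then show "c \<le> y" using assms(4) by blast
qed

lemma max_forcing_number_eqI:
  assumes "finite {M. perfect_matching V E M}" "perfect_matching V E M\<^sub>0" "forcing_number V E M\<^sub>0 = c"
    and "\<And>M. perfect_matching V E M \<Longrightarrow> forcing_number V E M \<le> c"
  shows "max_forcing_number V E = c"
  unfolding max_forcing_number_def
proof (rule Max_eqI)
  show "finite {forcing_number V E M | M. perfect_matching V E M}"
    using assms(1) by (simp add: setcompr_eq_image)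
  show "c \<in> {forcing_number V E M | M. perfect_matching V E M}" using assms(2,3) by blast
  fix y assume "y \<in> {forcing_number V E M | M. perfect_matching V E M}"
  then show "y \<le> c" using assms(4) by blast
qed

section \<open>The graph H_k\<close>

definition partner :: "nat \<Rightarrow> nat" where
  "partner i = (if odd i then i + 1 else i - 1)"

definition block :: "nat \<Rightarrow> nat" where
  "block i = (i + 1) div 2"

definition partners :: "nat \<Rightarrow> nat \<Rightarrow> nat \<Rightarrow> bool" where
  "partners k i j \<longleftrightarrow> i \<le> 2*k \<and> j = partner i"

lemma index_cases [case_names zero odd even]:
  fixes i :: nat
  obtains "i = 0" | m where "i = Suc (2*m)" | m where "i = Suc (Suc (2*m))"
proof -
  have "i = 0 \<or> (\<exists>m. i = Suc (2*m) \<or> i = Suc (Suc (2*m)))" by presburger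
  then show ?thesis using that by blast
qed

lemma partner_Suc_double [simp]: "partner (Suc (2*m)) = Suc (Suc (2*m))" "partner (Suc (Suc (2*m))) = Suc (2*m)"
  unfolding partner_def by simp_all

lemma block_Suc_double [simp]: "block (Suc (2*m)) = Suc m" "block (Suc (Suc (2*m))) = Suc m"
  unfolding block_def by simp_all

lemma partner_partner: "1 \<le> i \<Longrightarrow> partner (partner i) = i"
  by (cases i rule: index_cases) simp_all

lemma block_eq_iff: "1 \<le> i \<Longrightarrow> 1 \<le> j \<Longrightarrow> block i = block j \<longleftrightarrow> j = i \<or> j = partner i"
  by (cases i rule: index_cases; cases j rule: index_cases; simp; presburger)

lemma partners_sym: "1 \<le> i \<Longrightarrow> partners k i j \<Longrightarrow> partners k j i"
  unfolding partners_def by (cases i rule: index_cases; auto; presburger)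

lemma partners_bounds:
  assumes "1 \<le> i" "partners k i j"
  shows "1 \<le> j \<and> j \<le> 2*k \<and> j \<noteq> i"
proof -
  have "j \<le> 2*k" using partners_sym[OF assms] unfolding partners_def by simp
  moreover have "1 \<le> j \<and> j \<noteq> i" using assms unfolding partners_def by (cases i rule: index_cases) auto
  ultimately show ?thesis by simp
qed

lemma partners_iff_H_paired:
  "1 \<le> i \<Longrightarrow> i < j \<Longrightarrow> partners k i j \<longleftrightarrow> H_paired k i j"
  unfolding partners_def H_paired_def by (cases i rule: index_cases; simp; presburger)

lemma partners_odd_even: "1 \<le> t \<Longrightarrow> t \<le> k \<Longrightarrow> partners k (2*t - 1) (2*t)"
  unfolding partners_def by (cases t) simp_all

lemma partners_block_pair:
  "1 \<le> i \<Longrightarrow> partners k i j \<Longrightarrow> {i,j} = {2 * block i - 1, 2 * block i} \<and> block i \<in> {1..k}"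
  unfolding partners_def by (cases i rule: index_cases; auto; presburger)

lemma partners_block: "1 \<le> i \<Longrightarrow> partners k i j \<Longrightarrow> block j = block i"
  unfolding partners_def by (cases i rule: index_cases; auto; presburger)

definition H_adj :: "nat \<Rightarrow> nat \<Rightarrow> bool \<times> nat \<Rightarrow> bool \<times> nat \<Rightarrow> bool" where
  "H_adj n k x y \<longleftrightarrow> snd x \<in> {1..n} \<and> snd y \<in> {1..n} \<and> (fst x = fst y \<longleftrightarrow> partners k (snd x) (snd y))"

lemma H_adj_sym: "H_adj n k x y \<Longrightarrow> H_adj n k y x"
  unfolding H_adj_def using partners_sym by auto

lemma H_adj_neq: "H_adj n k x y \<Longrightarrow> x \<noteq> y"
  unfolding H_adj_def using partners_bounds by auto

lemma H_edgesE:
  assumes "e \<in> H_edges n k"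
  obtains (rung) i where "e = {(False,i),(True,i)}" "1 \<le> i" "i \<le> n"
    | (pair) s t where "e = {(s,2*t-1),(s,2*t)}" "1 \<le> t" "t \<le> k"
    | (cross) s i j where "e = {(s,i),(\<not>s,j)}" "1 \<le> i" "i < j" "j \<le> n" "\<not> H_paired k i j"
  using assms unfolding H_edges_def
proof (elim UnE CollectE exE conjE)
  fix i assume "e = {(False,i),(True,i)}" "1 \<le> i" "i \<le> n"
  then show thesis by (rule rung)
next
  fix t assume "e = {(False,2*t-1),(False,2*t)}" "1 \<le> t" "t \<le> k"
  then show thesis by (rule pair)
next
  fix t assume "e = {(True,2*t-1),(True,2*t)}" "1 \<le> t" "t \<le> k"
  then show thesis by (rule pair)
next
  fix i j assume "e = {(False,i),(True,j)}" "1 \<le> i" "i < j" "j \<le> n" "\<not> H_paired k i j"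
  then show thesis using cross[of False i j] by simp
next
  fix i j assume "e = {(True,i),(False,j)}" "1 \<le> i" "i < j" "j \<le> n" "\<not> H_paired k i j"
  then show thesis using cross[of True i j] by simp
qed

lemma H_edges_rung: "1 \<le> i \<Longrightarrow> i \<le> n \<Longrightarrow> {(False,i),(True,i)} \<in> H_edges n k"
  unfolding H_edges_def by blast

lemma H_edges_pair: "1 \<le> t \<Longrightarrow> t \<le> k \<Longrightarrow> {(s,2*t-1),(s,2*t)} \<in> H_edges n k"
  unfolding H_edges_def by (cases s) blast+

lemma H_edges_cross:
  "1 \<le> i \<Longrightarrow> i < j \<Longrightarrow> j \<le> n \<Longrightarrow> \<not> H_paired k i j \<Longrightarrow> {(s,i),(\<not>s,j)} \<in> H_edges n k"
  unfolding H_edges_def by (cases s) blast+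

lemma H_edgesD:
  assumes nk: "2*k < n" and e: "e \<in> H_edges n k"
  shows "\<exists>x y. e = {x,y} \<and> H_adj n k x y"
  using e
proof (cases rule: H_edgesE)
  case (rung i)
  then have "H_adj n k (False,i) (True,i)" using partners_bounds[of i k i] unfolding H_adj_def by auto
  with rung(1) show ?thesis by blast
next
  case (pair s t)
  have "partners k (2*t-1) (2*t)" using partners_odd_even pair(2,3) .
  with pair nk have "H_adj n k (s,2*t-1) (s,2*t)" unfolding H_adj_def by auto
  with pair(1) show ?thesis by blast
next
  case (cross s i j)
  then have "\<not> partners k i j" using partners_iff_H_paired by blast
  with cross have "H_adj n k (s,i) (\<not>s,j)" unfolding H_adj_def by simp
  with cross(1) show ?thesis by blast
qed

lemma H_edgesI:
  assumes "H_adj n k x y"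
  shows "{x,y} \<in> H_edges n k"
proof -
  obtain s i t j where xy: "x = (s,i)" "y = (t,j)" by force
  with assms have adj: "H_adj n k (s,i) (t,j)" by simp
  have ij: "1 \<le> i" "i \<le> n" "1 \<le> j" "j \<le> n" using adj unfolding H_adj_def by auto
  have "{(s,i),(t,j)} \<in> H_edges n k"
  proof (cases "s = t")
    case True
    then have "partners k i j" using adj unfolding H_adj_def by simp
    then have "{i,j} = {2 * block i - 1, 2 * block i}" "block i \<in> {1..k}"
      using partners_block_pair ij(1) by simp_all
    then have "{(s,i),(t,j)} = {(s, 2 * block i - 1), (s, 2 * block i)}"
      using True by (auto simp: doubleton_eq_iff)
    with \<open>block i \<in> {1..k}\<close> show ?thesis using H_edges_pair by simp
  next
    case False
    then have np: "\<not> partners k i j" "\<not> partners k j i"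
      using adj partners_sym ij unfolding H_adj_def by auto
    consider "i = j" | "i < j" | "j < i" by linarith
    then show ?thesis
    proof cases
      case 1
      then show ?thesis using False ij H_edges_rung[of i n k] by (cases s) (auto simp: insert_commute)
    next
      case 2
      then show ?thesis using False ij np partners_iff_H_paired[of i j k] H_edges_cross[of i j n k s]
        by simp
    next
      case 3
      then show ?thesis using False ij np partners_iff_H_paired[of j i k] H_edges_cross[of j i n k t]
        by (simp add: insert_commute)
    qed
  qed
  then show ?thesis using xy by simp
qed

lemma H_edges_eq:
  assumes "2*k < n"
  shows "H_edges n k = {{x,y} | x y. H_adj n k x y}"
proof
  show "H_edges n k \<subseteq> {{x,y} | x y. H_adj n k x y}" using H_edgesD[OF assms] by blast
  show "{{x,y} | x y. H_adj n k x y} \<subseteq> H_edges n k" using H_edgesI by blast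
qed

lemma mem_H_edges:
  assumes "2*k < n"
  shows "{x,y} \<in> H_edges n k \<longleftrightarrow> H_adj n k x y"
proof
  assume "{x,y} \<in> H_edges n k"
  then obtain a b where "{x,y} = {a,b}" "H_adj n k a b" unfolding H_edges_eq[OF assms] by blast
  then show "H_adj n k x y" using H_adj_sym by (metis doubleton_eq_iff)
qed (unfold H_edges_eq[OF assms], blast)

lemma H_adj_verts: "H_adj n k x y \<Longrightarrow> x \<in> H_verts n \<and> y \<in> H_verts n"
  unfolding H_adj_def H_verts_def by (simp add: mem_Times_iff)

lemma simple_graph_H:
  assumes "2*k < n"
  shows "simple_graph (H_verts n) (H_edges n k)"
  unfolding simple_graph_def H_edges_eq[OF assms]
  using H_adj_neq H_adj_verts by blast

lemma finite_H_verts: "finite (H_verts n)"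
  unfolding H_verts_def by simp

lemma card_perfect_matching_H:
  assumes "2*k < n" "perfect_matching (H_verts n) (H_edges n k) M"
  shows "card M = n"
proof -
  have "card (H_verts n) = 2 * n" unfolding H_verts_def by (simp add: card_cartesian_product)
  then show ?thesis using card_perfect_matching(2)[OF assms(2) simple_graph_H[OF assms(1)] finite_H_verts] by simp
qed

lemma forcing_number_H_upper:
  assumes nk: "2*k < n" and pm: "perfect_matching (H_verts n) (H_edges n k) M"
  shows "forcing_number (H_verts n) (H_edges n k) M \<le> n - 1"
proof -
  have "M \<noteq> {}" using card_perfect_matching_H[OF nk pm] nk by auto
  then show ?thesis
    using forcing_number_le_card_minus_one[OF pm simple_graph_H[OF nk] finite_H_verts]
      card_perfect_matching_H[OF nk pm] by simp
qed

section \<open>A matching with forcing number n - k - 1\<close>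

definition block_mate :: "nat \<Rightarrow> bool \<times> nat \<Rightarrow> bool \<times> nat" where
  "block_mate k x = (if snd x \<le> 2*k then (fst x, partner (snd x)) else (\<not> fst x, snd x))"

definition block_matching :: "nat \<Rightarrow> nat \<Rightarrow> (bool \<times> nat) set set" where
  "block_matching n k = (\<lambda>x. {x, block_mate k x}) ` H_verts n"

definition block_forcing_set :: "nat \<Rightarrow> nat \<Rightarrow> (bool \<times> nat) set set" where
  "block_forcing_set n k =
     (\<lambda>t. {(False, 2*t - 1), (False, 2*t)}) ` {1..k} \<union> (\<lambda>i. {(False,i),(True,i)}) ` {2*k+2..n}"

lemma block_mate:
  assumes nk: "2*k < n" and x: "x \<in> H_verts n"
  shows "block_mate k x \<in> H_verts n \<and> block_mate k (block_mate k x) = x \<and> H_adj n k x (block_mate k x)"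
proof -
  obtain s i where si: "x = (s,i)" "1 \<le> i" "i \<le> n" using x unfolding H_verts_def by auto
  show ?thesis
  proof (cases "i \<le> 2*k")
    case True
    then have "partners k i (partner i)" unfolding partners_def by simp
    then have p: "1 \<le> partner i" "partner i \<le> 2*k" using partners_bounds si(2) by simp_all
    have "block_mate k x = (s, partner i)" "block_mate k (s, partner i) = x"
      using si(1,2) True p(2) partner_partner[of i] unfolding block_mate_def by simp_all
    moreover have "H_adj n k (s,i) (s, partner i)"
      using si(2,3) p nk \<open>partners k i (partner i)\<close> unfolding H_adj_def by simp
    ultimately show ?thesis using si p nk unfolding H_verts_def by simp
  next
    case False
    then have "\<not> partners k i i" unfolding partners_def by simp
    then have "H_adj n k (s,i) (\<not> s, i)" using si(2,3) unfolding H_adj_def by simp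
    moreover have "block_mate k x = (\<not> s, i)" "block_mate k (\<not> s, i) = x"
      using si(1) False unfolding block_mate_def by simp_all
    ultimately show ?thesis using si unfolding H_verts_def by simp
  qed
qed

lemma perfect_matching_block_matching:
  assumes nk: "2*k < n"
  shows "perfect_matching (H_verts n) (H_edges n k) (block_matching n k)"
  unfolding block_matching_def
proof (rule perfect_matching_involution)
  fix x assume "x \<in> H_verts n"
  then have "block_mate k x \<in> H_verts n \<and> block_mate k (block_mate k x) = x \<and> H_adj n k x (block_mate k x)"
    by (rule block_mate[OF nk])
  then show "block_mate k x \<in> H_verts n \<and> block_mate k x \<noteq> x \<and> block_mate k (block_mate k x) = x
      \<and> {x, block_mate k x} \<in> H_edges n k"
    using H_adj_neq[of n k x "block_mate k x"] mem_H_edges[OF nk, of x "block_mate k x"] by simp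
qed

lemma block_forcing_set_covers:
  assumes "1 \<le> j" "j \<le> n" "j \<noteq> 2*k+1"
  shows "{(False,j), block_mate k (False,j)} \<in> block_forcing_set n k"
proof (cases "j \<le> 2*k")
  case True
  then have "partners k j (partner j)" unfolding partners_def by simp
  then have "{j, partner j} = {2 * block j - 1, 2 * block j}" "block j \<in> {1..k}"
    using partners_block_pair assms(1) by simp_all
  then have "{(False,j), block_mate k (False,j)} = {(False, 2 * block j - 1), (False, 2 * block j)}
      \<and> block j \<in> {1..k}"
    using True unfolding block_mate_def by (auto simp: doubleton_eq_iff)
  then show ?thesis unfolding block_forcing_set_def by blast
next
  case False
  with assms show ?thesis unfolding block_forcing_set_def block_mate_def by auto
qed

lemma block_forcing_set_subset:
  assumes "2*k < n"
  shows "block_forcing_set n k \<subseteq> block_matching n k"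
proof
  fix e assume "e \<in> block_forcing_set n k"
  then show "e \<in> block_matching n k"
    unfolding block_forcing_set_def
  proof (elim UnE imageE)
    fix t assume e: "e = {(False, 2*t - 1), (False, 2*t)}" and t: "t \<in> {1..k}"
    have "partners k (2*t - 1) (2*t)" using t by (intro partners_odd_even) auto
    then have "e = {(False, 2*t - 1), block_mate k (False, 2*t - 1)}"
      unfolding e block_mate_def partners_def by simp
    moreover have "(False, 2*t - 1) \<in> H_verts n"
      using t assms unfolding H_verts_def by auto
    ultimately show ?thesis unfolding block_matching_def by (rule image_eqI)
  next
    fix i assume e: "e = {(False,i),(True,i)}" and i: "i \<in> {2*k+2..n}"
    then have "e = {(False,i), block_mate k (False,i)}" unfolding block_mate_def by simp
    moreover have "(False,i) \<in> H_verts n" using i unfolding H_verts_def by simp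
    ultimately show ?thesis unfolding block_matching_def by (rule image_eqI)
  qed
qed

lemma card_block_forcing_set:
  assumes "2*k < n"
  shows "card (block_forcing_set n k) \<le> n - k - 1"
proof -
  have "card (block_forcing_set n k)
      \<le> card ((\<lambda>t. {(False, 2*t - 1), (False, 2*t)}) ` {1..k}) + card ((\<lambda>i. {(False,i),(True,i)}) ` {2*k+2..n})"
    unfolding block_forcing_set_def by (rule card_Un_le)
  also have "\<dots> \<le> card {1..k} + card {2*k+2..n}"
    by (intro add_mono card_image_le) simp_all
  also have "\<dots> = n - k - 1" using assms by simp
  finally show ?thesis .
qed

lemma H_adj_TrueE:
  assumes "H_adj n k (True,i) z"
  obtains (cross) j where "z = (False,j)" "1 \<le> j" "j \<le> n"
    | (partner) "z = (True, partner i)" "i \<le> 2*k"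
proof -
  obtain s j where z: "z = (s,j)" by force
  with assms have "j \<in> {1..n}" "s \<longleftrightarrow> partners k i j" unfolding H_adj_def by simp_all
  then show ?thesis using that z unfolding partners_def by (cases s) auto
qed

lemma True_mem_block_mate_edge: "(True,i) \<in> {(False,j), block_mate k (False,j)} \<longleftrightarrow> 2*k < j \<and> i = j"
  unfolding block_mate_def by auto

text \<open>The vertex (True, 2k+1) has no neighbour on its own side, and all other u-vertices are
  covered by the forcing set.\<close>
lemma block_forcing_set_forces_u_edges:
  assumes nk: "2*k < n" and pm': "perfect_matching (H_verts n) (H_edges n k) M'"
    and S: "block_forcing_set n k \<subseteq> M'" and j: "1 \<le> j" "j \<le> n"
  shows "{(False,j), block_mate k (False,j)} \<in> M'"
proof (cases "j = 2*k+1")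
  case False
  then show ?thesis using block_forcing_set_covers[OF j] S by blast
next
  case True
  have "{(True,j),(False,j)} \<in> M'"
  proof (rule perfect_matching_forced_edge[OF pm' simple_graph_H[OF nk]])
    show "(True,j) \<in> H_verts n" using j unfolding H_verts_def by simp
    fix z assume z: "{(True,j), z} \<in> H_edges n k" "z \<noteq> (False,j)"
    then have "H_adj n k (True,j) z" using mem_H_edges[OF nk] by simp
    then obtain j' where j': "z = (False,j')" "1 \<le> j'" "j' \<le> n"
      using True by (cases rule: H_adj_TrueE) auto
    have j'_ne: "j' \<noteq> 2*k+1" using j' z(2) True by simp
    have "{(False,j'), block_mate k (False,j')} \<in> M'" using block_forcing_set_covers[OF j'(2,3) j'_ne] S by blast
    moreover have "(True,j) \<notin> {(False,j'), block_mate k (False,j')}"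
      using True_mem_block_mate_edge[of j j' k] j'_ne True by auto
    ultimately show "\<exists>e\<in>M'. z \<in> e \<and> (True,j) \<notin> e" using j'(1) by blast
  qed
  then show ?thesis using True unfolding block_mate_def by (simp add: insert_commute)
qed

lemma block_forcing_set_forces_v_edges:
  assumes nk: "2*k < n" and pm': "perfect_matching (H_verts n) (H_edges n k) M'"
    and S: "block_forcing_set n k \<subseteq> M'" and i: "1 \<le> i" "i \<le> 2*k"
  shows "{(True,i),(True,partner i)} \<in> M'"
proof (rule perfect_matching_forced_edge[OF pm' simple_graph_H[OF nk]])
  show "(True,i) \<in> H_verts n" using i nk unfolding H_verts_def by simp
  fix z assume z: "{(True,i), z} \<in> H_edges n k" "z \<noteq> (True, partner i)"
  then have "H_adj n k (True,i) z" using mem_H_edges[OF nk] by simp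
  then obtain j where j: "z = (False,j)" "1 \<le> j" "j \<le> n" using z(2) by (cases rule: H_adj_TrueE) auto
  moreover have "(True,i) \<notin> {(False,j), block_mate k (False,j)}"
    using True_mem_block_mate_edge[of i j k] i by simp
  ultimately show "\<exists>e\<in>M'. z \<in> e \<and> (True,i) \<notin> e"
    using block_forcing_set_forces_u_edges[OF nk pm' S j(2,3)] by blast
qed

lemma forcing_set_block_forcing_set:
  assumes nk: "2*k < n"
  shows "forcing_set (H_verts n) (H_edges n k) (block_matching n k) (block_forcing_set n k)"
proof (rule forcing_setI[OF perfect_matching_block_matching[OF nk] simple_graph_H[OF nk]
      block_forcing_set_subset[OF nk]])
  fix M' assume pm': "perfect_matching (H_verts n) (H_edges n k) M'"
    and S: "block_forcing_set n k \<subseteq> M'"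
  show "block_matching n k \<subseteq> M'"
  proof
    fix e assume "e \<in> block_matching n k"
    then obtain s i where e: "e = {(s,i), block_mate k (s,i)}" "1 \<le> i" "i \<le> n"
      unfolding block_matching_def H_verts_def by auto
    consider "s = False" | "s = True" "2*k < i" | "s = True" "i \<le> 2*k" by force
    then show "e \<in> M'"
    proof cases
      case 1
      then show ?thesis using block_forcing_set_forces_u_edges[OF nk pm' S e(2,3)] e(1) by simp
    next
      case 2
      then have "e = {(False,i), block_mate k (False,i)}"
        using e(1) unfolding block_mate_def by (simp add: insert_commute)
      then show ?thesis using block_forcing_set_forces_u_edges[OF nk pm' S e(2,3)] by simp
    next
      case 3
      then show ?thesis
        using block_forcing_set_forces_v_edges[OF nk pm' S e(2)] e(1) unfolding block_mate_def by simp
    qed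
  qed
qed

section \<open>A matching with forcing number n - 1\<close>

definition rung_matching :: "nat \<Rightarrow> (bool \<times> nat) set set" where
  "rung_matching n = (\<lambda>x. {x, (\<not> fst x, snd x)}) ` H_verts n"

lemma perfect_matching_rung_matching:
  assumes nk: "2*k < n"
  shows "perfect_matching (H_verts n) (H_edges n k) (rung_matching n)"
  unfolding rung_matching_def
proof (rule perfect_matching_involution)
  fix x assume x: "x \<in> H_verts n"
  then obtain s i where si: "x = (s,i)" "i \<in> {1..n}" unfolding H_verts_def by auto
  then have "\<not> partners k i i" using partners_bounds[of i k i] by auto
  then have "H_adj n k (s,i) (\<not> s,i)" using si(2) unfolding H_adj_def by simp
  then show "(\<not> fst x, snd x) \<in> H_verts n \<and> (\<not> fst x, snd x) \<noteq> x \<and> (\<not> fst (\<not> fst x, snd x), snd (\<not> fst x, snd x)) = x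
      \<and> {x, (\<not> fst x, snd x)} \<in> H_edges n k"
    using si H_adj_verts mem_H_edges[OF nk] by simp
qed

lemma rung_matching_elem:
  assumes "e \<in> rung_matching n"
  obtains i where "e = {(False,i),(True,i)}" "i \<in> {1..n}"
proof -
  obtain s i where "e = {(s,i), (\<not> s, i)}" "i \<in> {1..n}"
    using assms unfolding rung_matching_def H_verts_def by auto
  then show ?thesis using that by (cases s) (auto simp: insert_commute)
qed

lemma rung_matching_switchable:
  assumes nk: "2*k < n" and ef: "e \<in> rung_matching n" "f \<in> rung_matching n" "e \<noteq> f"
  shows "switchable (H_edges n k) e f"
proof -
  obtain i where e: "e = {(False,i),(True,i)}" "i \<in> {1..n}" using rung_matching_elem[OF ef(1)] .
  obtain j where f: "f = {(False,j),(True,j)}" "j \<in> {1..n}" using rung_matching_elem[OF ef(2)] .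
  show ?thesis
  proof (cases "partners k i j")
    case True
    then have "partners k j i" using partners_sym e(2) by auto
    with True e(2) f(2) have "{(False,i),(False,j)} \<in> H_edges n k" "{(True,i),(True,j)} \<in> H_edges n k"
      unfolding mem_H_edges[OF nk] H_adj_def by auto
    with e(1) f(1) show ?thesis by (rule switchableI)
  next
    case False
    then have "\<not> partners k j i" using partners_sym f(2) by auto
    with False e(2) f(2) have "{(False,i),(True,j)} \<in> H_edges n k" "{(True,i),(False,j)} \<in> H_edges n k"
      unfolding mem_H_edges[OF nk] H_adj_def by auto
    moreover have "f = {(True,j),(False,j)}" using f(1) by (simp add: insert_commute)
    ultimately show ?thesis using e(1) by (intro switchableI)
  qed
qed

lemma forcing_number_rung_matching:
  assumes nk: "2*k < n"
  shows "n - 1 \<le> forcing_number (H_verts n) (H_edges n k) (rung_matching n)"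
proof -
  note pm = perfect_matching_rung_matching[OF nk] and E = simple_graph_H[OF nk]
  have "card (rung_matching n) - 1 \<le> forcing_number (H_verts n) (H_edges n k) (rung_matching n)"
  proof (rule card_minus_le_forcing_number[OF pm E finite_H_verts])
    fix T assume T: "T \<subseteq> rung_matching n"
      and unsw: "\<And>e f. e \<in> T \<Longrightarrow> f \<in> T \<Longrightarrow> e \<noteq> f \<Longrightarrow> \<not> switchable (H_edges n k) e f"
    have "finite T" using T card_perfect_matching(1)[OF pm E finite_H_verts] finite_subset by blast
    moreover have "e = f" if "e \<in> T" "f \<in> T" for e f
      using unsw[OF that] rung_matching_switchable[OF nk] T that by blast
    ultimately show "card T \<le> 1" by (simp add: card_le_Suc0_iff_eq)
  qed
  then show ?thesis using card_perfect_matching_H[OF nk pm] by simp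
qed

section \<open>Sets of pairwise non-switchable matching edges\<close>

lemma card_choose_two_le_card_sources:
  assumes fin: "finite A"
    and total: "\<And>x y. x \<in> A \<Longrightarrow> y \<in> A \<Longrightarrow> x \<noteq> y \<Longrightarrow> R x y \<or> R y x"
    and functional: "\<And>x y z. x \<in> A \<Longrightarrow> y \<in> A \<Longrightarrow> z \<in> A \<Longrightarrow> R x y \<Longrightarrow> R x z \<Longrightarrow> y = z"
  shows "card A choose 2 \<le> card {x \<in> A. \<exists>y\<in>A. R x y}"
proof -
  let ?pairs = "{B. B \<subseteq> A \<and> card B = 2}"
  define src where "src B = (SOME x. x \<in> B \<and> (\<exists>y\<in>B. y \<noteq> x \<and> R x y))" for B
  have src: "src B \<in> B \<and> (\<exists>y\<in>B. y \<noteq> src B \<and> R (src B) y)" if B: "B \<in> ?pairs" for B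
  proof -
    have "card B = 2" using B by simp
    then obtain x y where "B = {x,y}" "x \<noteq> y" unfolding card_2_iff by blast
    moreover have "x \<in> A" "y \<in> A" using B \<open>B = {x,y}\<close> by auto
    ultimately have "\<exists>x. x \<in> B \<and> (\<exists>y\<in>B. y \<noteq> x \<and> R x y)" using total[of x y] by auto
    then show ?thesis unfolding src_def by (rule someI_ex)
  qed
  have pair_eq: "B = {src B, y}" if "B \<in> ?pairs" "y \<in> B" "y \<noteq> src B" for B y
  proof -
    have "card B = 2" using that(1) by simp
    then obtain a b where "B = {a,b}" unfolding card_2_iff by blast
    moreover have "src B \<in> B" using src[OF that(1)] by blast
    ultimately show ?thesis using that(2,3) by auto
  qed
  have "inj_on src ?pairs"
  proof (rule inj_onI)
    fix B B' assume B: "B \<in> ?pairs" and B': "B' \<in> ?pairs" and eq: "src B = src B'"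
    obtain y where y: "y \<in> B" "y \<noteq> src B" "R (src B) y" using src[OF B] by blast
    obtain y' where y': "y' \<in> B'" "y' \<noteq> src B'" "R (src B') y'" using src[OF B'] by blast
    have "y = y'" using functional[of "src B" y y'] src[OF B] y y' eq B B' by auto
    then show "B = B'" using pair_eq[OF B y(1,2)] pair_eq[OF B' y'(1,2)] eq by simp
  qed
  moreover have "src ` ?pairs \<subseteq> {x \<in> A. \<exists>y\<in>A. R x y}"
  proof clarify
    fix B assume B: "B \<subseteq> A" "card B = 2"
    then show "src B \<in> A \<and> (\<exists>y\<in>A. R (src B) y)" using src[of B] by blast
  qed
  ultimately have "card ?pairs \<le> card {x \<in> A. \<exists>y\<in>A. R x y}"
    using fin by (intro card_inj_on_le) auto
  then show ?thesis using n_subsets[OF fin, of 2] by simp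
qed

lemma card_le_twice_card_image:
  assumes fin: "finite A" and fibres: "\<And>x. x \<in> A \<Longrightarrow> \<exists>y. {z \<in> A. f z = f x} \<subseteq> {x, y}"
  shows "card A \<le> 2 * card (f ` A)"
proof -
  have "A = (\<Union>b\<in>f ` A. {z \<in> A. f z = b})" by blast
  then have "card A \<le> (\<Sum>b\<in>f ` A. card {z \<in> A. f z = b})"
    using card_UN_le[of "f ` A" "\<lambda>b. {z \<in> A. f z = b}"] fin by simp
  also have "\<dots> \<le> (\<Sum>b\<in>f ` A. 2)"
  proof (rule sum_mono)
    fix b assume "b \<in> f ` A"
    then obtain x where "x \<in> A" "b = f x" by blast
    then obtain y where "{z \<in> A. f z = b} \<subseteq> {x, y}" using fibres by blast
    moreover have "card {x, y} \<le> 2" by (simp add: card_insert_if)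
    ultimately show "card {z \<in> A. f z = b} \<le> 2" by (meson card_mono finite.emptyI finite.insertI le_trans)
  qed
  finally show ?thesis by simp
qed

lemma choose_two_bound:
  fixes m d q :: nat
  assumes "m choose 2 \<le> d" "d \<le> m" "d \<le> 2 * q"
  shows "m \<le> q + 1"
proof -
  have "m \<le> 3"
  proof (rule ccontr)
    assume "\<not> m \<le> 3"
    then have "3 * m \<le> m * (m - 1)" by simp
    then have "m < m * (m - 1) div 2" using \<open>\<not> m \<le> 3\<close> by presburger
    with assms(1,2) show False unfolding choose_two by linarith
  qed
  then consider "m \<le> 1" | "m = 2" | "m = 3" by linarith
  then show ?thesis using assms by cases (auto simp: choose_two)
qed

lemma card_le_twice_card_blocks:
  assumes fin: "finite A" and pos: "\<And>a. a \<in> A \<Longrightarrow> 1 \<le> a"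
  shows "card A \<le> 2 * card (block ` A)"
proof (rule card_le_twice_card_image[OF fin])
  fix a assume a: "a \<in> A"
  have "{a' \<in> A. block a' = block a} \<subseteq> {a, partner a}"
  proof
    fix a' assume "a' \<in> {a' \<in> A. block a' = block a}"
    then have "a' \<in> A" "block a = block a'" by auto
    then show "a' \<in> {a, partner a}" using block_eq_iff[OF pos[OF a] pos] by simp
  qed
  then show "\<exists>b. {a' \<in> A. block a' = block a} \<subseteq> {a, b}" by blast
qed

text \<open>A pair p stands for a cross edge from index fst p to index snd p, and
  partners k (fst p) (snd q) says that the crossing edge from fst p to snd q is missing.\<close>
lemma card_partner_tournament:
  fixes P :: "(nat \<times> nat) set"
  assumes fin: "finite P" and pos: "\<And>p. p \<in> P \<Longrightarrow> 1 \<le> fst p"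
    and inj_fst: "inj_on fst P" and inj_snd: "inj_on snd P"
    and total: "\<And>p q. p \<in> P \<Longrightarrow> q \<in> P \<Longrightarrow> p \<noteq> q \<Longrightarrow> partners k (fst p) (snd q) \<or> partners k (fst q) (snd p)"
  shows "card P \<le> card (block ` fst ` {p \<in> P. \<exists>q\<in>P. partners k (fst p) (snd q)}) + 1"
proof -
  define D where "D = {p \<in> P. \<exists>q\<in>P. partners k (fst p) (snd q)}"
  have "card P choose 2 \<le> card D"
    unfolding D_def
  proof (rule card_choose_two_le_card_sources[OF fin total])
    fix p q q' assume "p \<in> P" "q \<in> P" "q' \<in> P" "partners k (fst p) (snd q)" "partners k (fst p) (snd q')"
    then have "snd q = snd q'" unfolding partners_def by simp
    then show "q = q'" using inj_onD[OF inj_snd] \<open>q \<in> P\<close> \<open>q' \<in> P\<close> by blast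
  qed
  moreover have "card D \<le> card P" unfolding D_def using fin by (intro card_mono) auto
  moreover have "card D \<le> 2 * card (block ` fst ` D)"
  proof -
    have "D \<subseteq> P" unfolding D_def by blast
    then have "card D = card (fst ` D)" using card_image inj_on_subset[OF inj_fst] by metis
    also have "\<dots> \<le> 2 * card (block ` fst ` D)"
    proof (rule card_le_twice_card_blocks)
      show "finite (fst ` D)" using finite_subset[OF \<open>D \<subseteq> P\<close> fin] by simp
    qed (use pos \<open>D \<subseteq> P\<close> in auto)
    finally show ?thesis .
  qed
  ultimately show ?thesis unfolding D_def[symmetric] by (rule choose_two_bound)
qed

locale one_sided_unswitchable =
  fixes n k :: nat and b :: bool and M T :: "(bool \<times> nat) set set"
  assumes nk: "2*k < n"
    and pm: "perfect_matching (H_verts n) (H_edges n k) M"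
    and T_sub: "T \<subseteq> M"
    and unswitchable: "\<And>e f. e \<in> T \<Longrightarrow> f \<in> T \<Longrightarrow> e \<noteq> f \<Longrightarrow> \<not> switchable (H_edges n k) e f"
    and no_b_edge: "\<And>i j. {(b,i),(b,j)} \<notin> T"
begin

definition cross :: "nat \<times> nat \<Rightarrow> (bool \<times> nat) set" where
  "cross p = {(\<not> b, fst p), (b, snd p)}"

definition cross_pairs :: "(nat \<times> nat) set" where
  "cross_pairs = {p. cross p \<in> T}"

definition side_edges :: "(bool \<times> nat) set set" where
  "side_edges = {e \<in> T. \<exists>i j. e = {(\<not> b, i), (\<not> b, j)}}"

definition used_blocks :: "nat set" where
  "used_blocks = block ` fst ` {p \<in> cross_pairs. \<exists>q\<in>cross_pairs. partners k (fst p) (snd q)}"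

lemma T_edges: "T \<subseteq> H_edges n k"
  using T_sub pm unfolding perfect_matching_def by blast

lemma T_unique: "e \<in> T \<Longrightarrow> f \<in> T \<Longrightarrow> x \<in> e \<Longrightarrow> x \<in> f \<Longrightarrow> x \<in> H_verts n \<Longrightarrow> e = f"
  using perfect_matching_unique[OF pm] T_sub by blast

lemma T_eq: "T = side_edges \<union> cross ` cross_pairs"
proof
  show "T \<subseteq> side_edges \<union> cross ` cross_pairs"
  proof
    fix e assume e: "e \<in> T"
    then obtain x y where "e = {x,y}" "H_adj n k x y"
      using T_edges unfolding H_edges_eq[OF nk] by blast
    moreover obtain s i t j where "x = (s,i)" "y = (t,j)" by force
    ultimately have st: "e = {(s,i),(t,j)}" "H_adj n k (s,i) (t,j)" by simp_all
    consider "s = t" | "s = (\<not> b)" "t = b" | "s = b" "t = (\<not> b)" by blast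
    then show "e \<in> side_edges \<union> cross ` cross_pairs"
    proof cases
      case 1
      then have "s = (\<not> b)" using no_b_edge[of i j] e st(1) by auto
      then show ?thesis using 1 e st(1) unfolding side_edges_def by blast
    next
      case 2
      then have "e = cross (i,j)" using st(1) unfolding cross_def by simp
      then show ?thesis using e unfolding cross_pairs_def by blast
    next
      case 3
      then have "e = cross (j,i)" using st(1) unfolding cross_def by (simp add: insert_commute)
      then show ?thesis using e unfolding cross_pairs_def by blast
    qed
  qed
qed (auto simp: side_edges_def cross_pairs_def)

lemma side_edges_cross_disjoint: "side_edges \<inter> cross ` cross_pairs = {}"
  unfolding side_edges_def cross_def by (auto simp: doubleton_eq_iff)

lemma inj_cross: "inj_on cross A"
  unfolding cross_def inj_on_def by (auto simp: doubleton_eq_iff prod_eq_iff)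

lemma cross_pair_adj: "p \<in> cross_pairs \<Longrightarrow> H_adj n k (\<not> b, fst p) (b, snd p)"
  using T_edges mem_H_edges[OF nk] unfolding cross_pairs_def cross_def by blast

lemma cross_pair_range: "p \<in> cross_pairs \<Longrightarrow> fst p \<in> {1..n} \<and> snd p \<in> {1..n}"
  using cross_pair_adj unfolding H_adj_def by simp

lemma finite_cross_pairs: "finite cross_pairs"
proof (rule finite_subset)
  show "cross_pairs \<subseteq> {1..n} \<times> {1..n}" using cross_pair_range by (auto simp: mem_Times_iff)
qed simp

lemma inj_fst_cross_pairs: "inj_on fst cross_pairs"
proof (rule inj_onI)
  fix p q assume pq: "p \<in> cross_pairs" "q \<in> cross_pairs" "fst p = fst q"
  have "(\<not> b, fst p) \<in> H_verts n" using cross_pair_range[OF pq(1)] unfolding H_verts_def by simp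
  then have "cross p = cross q"
    using T_unique[of "cross p" "cross q" "(\<not> b, fst p)"] pq unfolding cross_pairs_def cross_def by simp
  then show "p = q" using inj_cross unfolding inj_on_def by blast
qed

lemma inj_snd_cross_pairs: "inj_on snd cross_pairs"
proof (rule inj_onI)
  fix p q assume pq: "p \<in> cross_pairs" "q \<in> cross_pairs" "snd p = snd q"
  have "(b, snd p) \<in> H_verts n" using cross_pair_range[OF pq(1)] unfolding H_verts_def by simp
  then have "cross p = cross q"
    using T_unique[of "cross p" "cross q" "(b, snd p)"] pq unfolding cross_pairs_def cross_def by simp
  then show "p = q" using inj_cross unfolding inj_on_def by blast
qed

lemma cross_pairs_total:
  assumes pq: "p \<in> cross_pairs" "q \<in> cross_pairs" "p \<noteq> q"
  shows "partners k (fst p) (snd q) \<or> partners k (fst q) (snd p)"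
proof (rule ccontr)
  assume "\<not> ?thesis"
  then have "H_adj n k (\<not> b, fst p) (b, snd q)" "H_adj n k (\<not> b, fst q) (b, snd p)"
    using cross_pair_range[OF pq(1)] cross_pair_range[OF pq(2)] unfolding H_adj_def by auto
  then have "{(\<not> b, fst p), (b, snd q)} \<in> H_edges n k" "{(b, snd p), (\<not> b, fst q)} \<in> H_edges n k"
    using H_adj_sym mem_H_edges[OF nk] by blast+
  moreover have "cross q = {(b, snd q), (\<not> b, fst q)}" unfolding cross_def by (simp add: insert_commute)
  ultimately have "switchable (H_edges n k) (cross p) (cross q)"
    by (intro switchableI[of _ "(\<not> b, fst p)" "(b, snd p)"]) (simp_all add: cross_def)
  moreover have "cross p \<noteq> cross q" using inj_cross pq(3) unfolding inj_on_def by blast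
  ultimately show False using unswitchable pq(1,2) unfolding cross_pairs_def by blast
qed

lemma card_cross_pairs: "card cross_pairs \<le> card used_blocks + 1"
  unfolding used_blocks_def
  using card_partner_tournament[OF finite_cross_pairs _ inj_fst_cross_pairs inj_snd_cross_pairs cross_pairs_total]
    cross_pair_range by simp

lemma used_blocks_subset: "used_blocks \<subseteq> {1..k}"
proof
  fix t assume "t \<in> used_blocks"
  then obtain p q where "p \<in> cross_pairs" "q \<in> cross_pairs" "partners k (fst p) (snd q)" "t = block (fst p)"
    unfolding used_blocks_def by blast
  then show "t \<in> {1..k}" using partners_block_pair[of "fst p" k "snd q"] cross_pair_range by simp
qed

lemma side_edges_subset: "side_edges \<subseteq> (\<lambda>t. {(\<not> b, 2*t - 1), (\<not> b, 2*t)}) ` ({1..k} - used_blocks)"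
proof
  fix e assume e: "e \<in> side_edges"
  then obtain i j where ij: "e = {(\<not> b, i), (\<not> b, j)}" "e \<in> T" unfolding side_edges_def by blast
  then have "{(\<not> b, i), (\<not> b, j)} \<in> H_edges n k" using T_edges by blast
  then have adj: "H_adj n k (\<not> b, i) (\<not> b, j)" using mem_H_edges[OF nk] by simp
  then have i: "i \<in> {1..n}" and "partners k i j" unfolding H_adj_def by simp_all
  define t where "t = block i"
  have t: "{i,j} = {2*t - 1, 2*t}" "t = block i" "t \<in> {1..k}"
    using partners_block_pair[of i k j] i \<open>partners k i j\<close> unfolding t_def by simp_all
  have "t \<notin> used_blocks"
  proof
    assume "t \<in> used_blocks"
    then obtain p where "p \<in> cross_pairs" "t = block (fst p)" unfolding used_blocks_def by auto
    with t(2) have p: "p \<in> cross_pairs" "block (fst p) = block i" by simp_all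
    moreover have "1 \<le> fst p" using cross_pair_range[OF p(1)] by simp
    ultimately have "fst p = i \<or> fst p = partner i"
      using block_eq_iff[of i "fst p"] i by simp
    then have "fst p = i \<or> fst p = j" using \<open>partners k i j\<close> unfolding partners_def by simp
    then have "(\<not> b, fst p) \<in> e" "(\<not> b, fst p) \<in> cross p" using ij(1) unfolding cross_def by auto
    moreover have "(\<not> b, fst p) \<in> H_verts n" using cross_pair_range[OF p(1)] unfolding H_verts_def by simp
    ultimately have "e = cross p" using T_unique ij(2) p(1) unfolding cross_pairs_def by blast
    then show False using side_edges_cross_disjoint e p(1) by blast
  qed
  moreover have "e = {(\<not> b, 2*t - 1), (\<not> b, 2*t)}" using ij(1) t(1) by (auto simp: doubleton_eq_iff)
  ultimately show "e \<in> (\<lambda>t. {(\<not> b, 2*t - 1), (\<not> b, 2*t)}) ` ({1..k} - used_blocks)"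
    using t(3) by blast
qed

lemma card_side_edges: "card side_edges \<le> k - card used_blocks"
proof -
  have "card side_edges \<le> card ((\<lambda>t. {(\<not> b, 2*t - 1), (\<not> b, 2*t)}) ` ({1..k} - used_blocks))"
    by (rule card_mono[OF _ side_edges_subset]) simp
  also have "\<dots> \<le> card ({1..k} - used_blocks)" by (rule card_image_le) simp
  also have "\<dots> = k - card used_blocks"
    using card_Diff_subset[OF finite_subset[OF used_blocks_subset] used_blocks_subset] by simp
  finally show ?thesis .
qed

theorem card_le: "card T \<le> k + 1"
proof -
  have "finite side_edges" using finite_subset[OF side_edges_subset] by simp
  have "card T = card (side_edges \<union> cross ` cross_pairs)" using arg_cong[OF T_eq, of card] .
  also have "\<dots> = card side_edges + card (cross ` cross_pairs)"
    using \<open>finite side_edges\<close> finite_cross_pairs side_edges_cross_disjoint by (simp add: card_Un_disjoint)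
  also have "card (cross ` cross_pairs) = card cross_pairs" by (rule card_image[OF inj_cross])
  finally have "card T = card side_edges + card cross_pairs" .
  moreover have "card used_blocks \<le> k" using card_mono[OF _ used_blocks_subset] by simp
  ultimately show ?thesis using card_side_edges card_cross_pairs by linarith
qed

end

lemma opposite_side_edges_switchable:
  assumes nk: "2*k < n"
    and e: "{(False,i),(False,j)} \<in> H_edges n k" and f: "{(True,i'),(True,j')} \<in> H_edges n k"
  shows "switchable (H_edges n k) {(False,i),(False,j)} {(True,i'),(True,j')}"
proof -
  have ij: "partners k i j" "partners k i' j'" "i \<in> {1..n}" "j \<in> {1..n}" "i' \<in> {1..n}" "j' \<in> {1..n}"
    using e f unfolding mem_H_edges[OF nk] H_adj_def by simp_all
  show ?thesis
  proof (cases "block i' = block i")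
    case True
    then have "i' = i \<or> i' = partner i" using block_eq_iff[of i i'] ij(3,5) by simp
    then have "i' = i \<and> j' = j \<or> i' = j \<and> j' = i"
      using ij(1,2,3) partner_partner[of i] unfolding partners_def by auto
    then have "{(True,i'),(True,j')} = {(True,i),(True,j)}" by auto
    moreover have "{(False,i),(True,i)} \<in> H_edges n k" "{(False,j),(True,j)} \<in> H_edges n k"
      using ij partners_bounds unfolding mem_H_edges[OF nk] H_adj_def by auto
    ultimately show ?thesis
      by (intro switchableI[of _ "(False,i)" "(False,j)" _ "(True,i)" "(True,j)"]) simp_all
  next
    case False
    have "block j = block i" "block j' = block i'"
      using partners_block ij by simp_all
    then have "\<not> partners k i i'" "\<not> partners k j j'"
      using False partners_block[of i k i'] partners_block[of j k j'] ij(3,4) by auto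
    then have "{(False,i),(True,i')} \<in> H_edges n k" "{(False,j),(True,j')} \<in> H_edges n k"
      using ij unfolding mem_H_edges[OF nk] H_adj_def by auto
    then show ?thesis
      by (intro switchableI[of _ "(False,i)" "(False,j)" _ "(True,i')" "(True,j')"]) simp_all
  qed
qed

lemma card_unswitchable_le:
  assumes nk: "2*k < n" and pm: "perfect_matching (H_verts n) (H_edges n k) M" and T_sub: "T \<subseteq> M"
    and unswitchable: "\<And>e f. e \<in> T \<Longrightarrow> f \<in> T \<Longrightarrow> e \<noteq> f \<Longrightarrow> \<not> switchable (H_edges n k) e f"
  shows "card T \<le> k + 1"
proof (cases "\<exists>b. \<forall>i j. {(b,i),(b,j)} \<notin> T")
  case True
  then obtain b where no_b: "\<And>i j. {(b,i),(b,j)} \<notin> T" by blast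
  interpret one_sided_unswitchable n k b M T
    by (rule one_sided_unswitchable.intro[OF nk pm T_sub unswitchable no_b])
  show ?thesis by (rule card_le)
next
  case False
  then have "\<forall>b. \<exists>i j. {(b,i),(b,j)} \<in> T" by simp
  then have "\<exists>i j. {(False,i),(False,j)} \<in> T" "\<exists>i j. {(True,i),(True,j)} \<in> T" by blast+
  then obtain i j i' j' where e: "{(False,i),(False,j)} \<in> T" and f: "{(True,i'),(True,j')} \<in> T"
    by blast
  have "T \<subseteq> H_edges n k" using T_sub pm unfolding perfect_matching_def by blast
  then have "switchable (H_edges n k) {(False,i),(False,j)} {(True,i'),(True,j')}"
    using opposite_side_edges_switchable[OF nk] e f by blast
  moreover have "{(False,i),(False,j)} \<noteq> {(True,i'),(True,j')}" by (simp add: doubleton_eq_iff)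
  ultimately show ?thesis using unswitchable[OF e f] by blast
qed

lemma forcing_number_H_lower:
  assumes nk: "2*k < n" and pm: "perfect_matching (H_verts n) (H_edges n k) M"
  shows "n - k - 1 \<le> forcing_number (H_verts n) (H_edges n k) M"
  using card_minus_le_forcing_number[OF pm simple_graph_H[OF nk] finite_H_verts card_unswitchable_le[OF nk pm]]
    card_perfect_matching_H[OF nk pm] by simp

theorem lemma5p6:
  fixes n k :: nat
  assumes "1 \<le> n" and "k \<le> (n - 1) div 2"
  shows "min_forcing_number (H_verts n) (H_edges n k) = n - k - 1
    \<and> (k = (n - 1) div 2 \<longrightarrow>
         min_forcing_number (H_verts n) (H_edges n k) = n div 2
       \<and> max_forcing_number (H_verts n) (H_edges n k) = n - 1)"
proof -
  have nk: "2*k < n" using assms by linarith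
  have fin: "finite {M. perfect_matching (H_verts n) (H_edges n k) M}"
    using finite_perfect_matchings[OF finite_H_verts simple_graph_H[OF nk]] .
  have "forcing_number (H_verts n) (H_edges n k) (block_matching n k) = n - k - 1"
    using forcing_number_le[OF forcing_set_block_forcing_set[OF nk]] card_block_forcing_set[OF nk]
      forcing_number_H_lower[OF nk perfect_matching_block_matching[OF nk]] by linarith
  then have min: "min_forcing_number (H_verts n) (H_edges n k) = n - k - 1"
    using min_forcing_number_eqI[OF fin perfect_matching_block_matching[OF nk]] forcing_number_H_lower[OF nk]
    by blast
  have "forcing_number (H_verts n) (H_edges n k) (rung_matching n) = n - 1"
    using forcing_number_rung_matching[OF nk] forcing_number_H_upper[OF nk perfect_matching_rung_matching[OF nk]]
    by linarith
  then have max: "max_forcing_number (H_verts n) (H_edges n k) = n - 1"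
    using max_forcing_number_eqI[OF fin perfect_matching_rung_matching[OF nk]] forcing_number_H_upper[OF nk]
    by blast
  show ?thesis
  proof (intro conjI impI)
    assume "k = (n - 1) div 2"
    then have "n - k - 1 = n div 2" using assms(1) by presburger
    with min show "min_forcing_number (H_verts n) (H_edges n k) = n div 2" by simp
  qed (use min max in simp_all)
qed

end
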